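(* Let $\alpha = 1-\frac{1}{W_{-1}(-2/e^3)+1}\approx 1.3871$ (equivalently, $1-1/\alpha$ is the solution $x$ of $3+\ln(1/2)=\ln(x)+1/x$ used to define it). For $\epsilon>0$, let $\mathcal{S}_\epsilon=\{\ell = 1/2+i\epsilon : i\in\mathbb{N}_{>0},\ \ell\le 1/\alpha\}$, let $B\ge 1/\epsilon$ be an integer and $c>0$. Consider the linear program $(\mathrm{LP}_\epsilon)$ in variables $\alpha_\epsilon$, $N_0$ and $N_x$ ($x\in\mathcal{S}_\epsilon$): minimize $\alpha_\epsilon$ subject to $N_0+\sum_{x\in\mathcal{S}_\epsilon}(1-x)N_x\ge B-1/B^c$; $N_0+\sum_{x\in\mathcal{S}_\epsilon}N_x\le \alpha_\epsilon\cdot B$; $N_0+\sum_{x\in\mathcal{S}_\epsilon,\,x\le t-\epsilon}N_x+\lfloor \frac{B}{1-t}\rfloor\le \alpha_\epsilon\cdot\lceil\frac{B}{1-t}\rceil$ for all $t\in\mathcal{S}_\epsilon$; $N_x\ge 0$. Then the optimal value $\alpha^\star_\epsilon$ of $(\mathrm{LP}_\epsilon)$ satisfies $\alpha^\star_\epsilon\in[\alpha-O(\epsilon),\alpha+O(\epsilon)]$. *)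

theory Defs
  imports Complex_Main
begin

definition lambertW_m1 :: "real \<Rightarrow> real" where
  "lambertW_m1 y = (THE w. w \<le> -1 \<and> w * exp w = y)"

definition alpha_star :: real where
  "alpha_star = 1 - 1 / (lambertW_m1 (-2 / exp 3) + 1)"

definition S_eps :: "real \<Rightarrow> real set" where
  "S_eps \<epsilon> = {l. \<exists>i::nat. i > 0 \<and> l = 1/2 + real i * \<epsilon> \<and> l \<le> 1 / alpha_star}"

text \<open>Feasibility for (LP_eps): a is the objective variable alpha_eps, N0 and N x (x in S_eps).\<close>
definition LP_feasible ::
  "real \<Rightarrow> nat \<Rightarrow> real \<Rightarrow> real \<Rightarrow> real \<Rightarrow> (real \<Rightarrow> real) \<Rightarrow> bool" where
  "LP_feasible \<epsilon> B c a N0 N \<longleftrightarrow>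
     N0 \<ge> 0 \<and> (\<forall>x\<in>S_eps \<epsilon>. N x \<ge> 0) \<and>
     N0 + (\<Sum>x\<in>S_eps \<epsilon>. (1 - x) * N x) \<ge> real B - 1 / (real B powr c) \<and>
     N0 + (\<Sum>x\<in>S_eps \<epsilon>. N x) \<le> a * real B \<and>
     (\<forall>t\<in>S_eps \<epsilon>.
        N0 + (\<Sum>x\<in>{x\<in>S_eps \<epsilon>. x \<le> t - \<epsilon>}. N x) + of_int \<lfloor>real B / (1 - t)\<rfloor>
          \<le> a * of_int \<lceil>real B / (1 - t)\<rceil>)"

definition LP_opt :: "real \<Rightarrow> nat \<Rightarrow> real \<Rightarrow> real" where
  "LP_opt \<epsilon> B c = Inf {a. \<exists>N0 N. LP_feasible \<epsilon> B c a N0 N}"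

end

theory Submission
  imports Defs
begin

text \<open>Put \<open>x* = 1 - 1/\<alpha>\<close>, so that \<open>ln x* + 1/x* = 3 - ln 2\<close>. The LP discretises a covering
  problem on the interval \<open>[1/2, 1 - x*]\<close>. For the lower bound, the capacity constraint at \<open>t\<close>
  bounds the mass placed before \<open>t\<close> by about \<open>(a - 1) B/(1 - t)\<close>; summing these bounds by parts
  against the coverage constraint yields, up to a Riemann-sum error of order \<open>\<epsilon>\<close>,
  \<open>1 \<le> (a - 1)(1/x* - 2) + x* a\<close>, i.e. \<open>a \<ge> 1/(1 - x*) = \<alpha>\<close>. For the upper bound, the
  covering whose mass before \<open>t\<close> is exactly \<open>x* a B/(1 - t)\<close> is feasible for \<open>a = \<alpha>(1 + 14\<epsilon>)\<close>.
  Both directions reduce to estimating the Riemann sums of \<open>1/(1 - t)\<close> by logarithms.\<close>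

section \<open>The constant \<open>\<alpha>\<close>\<close>

lemma mult_exp_strict_antimono:
  fixes v w :: real
  assumes "v < w" "w \<le> -1"
  shows "w * exp w < v * exp v"
proof -
  define d where "d = w - v"
  have "d > 0" using assms by (simp add: d_def)
  have "d < exp d - 1" using exp_minus_greater[of "-d"] \<open>d > 0\<close> by simp
  also have "\<dots> \<le> (-w) * (exp d - 1)"
    using assms \<open>d > 0\<close> mult_right_mono[of 1 "-w" "exp d - 1"] by simp
  finally have "w * exp d < v" by (simp add: d_def algebra_simps)
  hence "exp v * (w * exp d) < exp v * v" by simp
  thus ?thesis by (simp add: d_def exp_diff mult.commute)
qed

lemma lambertW_m1_eqI:
  assumes "w \<le> -1" "w * exp w = y"
  shows "lambertW_m1 y = w"
  unfolding lambertW_m1_def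
proof (rule the_equality)
  fix v assume v: "v \<le> -1 \<and> v * exp v = y"
  show "v = w"
    using mult_exp_strict_antimono[of v w] mult_exp_strict_antimono[of w v] assms v
    by (cases v w rule: linorder_cases) auto
qed (use assms in simp)

definition x_star :: real where "x_star = 1 - 1 / alpha_star"

lemma x_star_characterization:
  shows x_star_ge: "1/10 \<le> x_star" and x_star_le: "x_star \<le> 1/3"
    and ln_x_star: "ln x_star + 1 / x_star = 3 - ln 2"
proof -
  let ?f = "\<lambda>w::real. w * exp w"
  have "?f (-3) \<le> -2 / exp 3" by (simp add: exp_minus field_simps)
  moreover have "-2 / exp 3 \<le> ?f (-10)"
  proof -
    have "5 < exp (7::real)" using exp_ge_add_one_self[of 7] by simp
    hence "5 * exp 3 < exp 7 * exp (3::real)" by simp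
    thus ?thesis by (simp add: exp_minus field_simps flip: exp_add)
  qed
  ultimately obtain w where w: "-10 \<le> w" "w \<le> -3" "?f w = -2 / exp 3"
    using IVT2[of ?f "-3" "-2 / exp 3" "-10"] by (auto intro!: continuous_intros)
  have "lambertW_m1 (-2 / exp 3) = w" using w by (intro lambertW_m1_eqI) auto
  hence x: "x_star = -1 / w"
    using w unfolding x_star_def alpha_star_def by (simp add: field_simps)
  show "1/10 \<le> x_star" "x_star \<le> 1/3" using w unfolding x by (auto simp: field_simps)
  have "(-w) * exp w = 2 * exp (-3)" using w(3) by (simp add: exp_minus field_simps)
  hence "ln ((-w) * exp w) = ln (2 * exp (-3))" by (rule arg_cong)
  moreover have "ln ((-w) * exp w) = ln (-w) + w" by (subst ln_mult) (use w in auto)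
  moreover have "ln (2 * exp (-3)) = ln 2 - (3::real)" by (simp add: ln_mult)
  ultimately have "ln (-w) + w = ln 2 - 3" by simp
  moreover have "ln x_star = - ln (-w)"
    using ln_inverse[of "-w"] w unfolding x by (simp add: divide_inverse)
  ultimately show "ln x_star + 1 / x_star = 3 - ln 2" unfolding x by simp
qed

lemma alpha_star_eq: "alpha_star = 1 / (1 - x_star)"
  by (simp add: x_star_def)

lemma alpha_star_bounds: "1 \<le> alpha_star" "alpha_star \<le> 3/2"
  using x_star_ge x_star_le by (simp_all add: alpha_star_eq field_simps)

section \<open>The grid \<open>S_eps\<close>\<close>

definition grid :: "real \<Rightarrow> nat \<Rightarrow> real" where
  "grid e i = 1/2 + real i * e"

definition grid_last :: "real \<Rightarrow> nat" where
  "grid_last e = nat \<lfloor>(1/2 - x_star) / e\<rfloor>"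

lemma grid_Suc: "grid e (Suc i) = grid e i + e"
  by (simp add: grid_def algebra_simps)

lemma grid_mono: "0 \<le> e \<Longrightarrow> i \<le> j \<Longrightarrow> grid e i \<le> grid e j"
  by (simp add: grid_def mult_right_mono)

lemma grid_le_iff:
  assumes "0 < e"
  shows "grid e j \<le> 1 - x_star \<longleftrightarrow> j \<le> grid_last e"
proof -
  have "grid e j \<le> 1 - x_star \<longleftrightarrow> real j * e \<le> 1/2 - x_star"
    by (simp add: grid_def) linarith
  also have "\<dots> \<longleftrightarrow> real j \<le> (1/2 - x_star) / e"
    using assms by (simp add: pos_le_divide_eq)
  also have "\<dots> \<longleftrightarrow> j \<le> grid_last e"
    using assms x_star_le unfolding grid_last_def by (simp add: le_nat_iff le_floor_iff)
  finally show ?thesis .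
qed

lemma grid_lt_one:
  assumes "0 < e" "k \<le> grid_last e"
  shows "grid e k < 1"
  using assms grid_le_iff[OF assms(1), of k] x_star_ge by simp

lemma S_eps_eq_grid:
  assumes "0 < e"
  shows "S_eps e = grid e ` {1..grid_last e}"
  using grid_le_iff[OF assms]
  unfolding S_eps_def alpha_star_eq by (auto simp: grid_def Suc_le_eq)

lemma sum_S_eps:
  assumes "0 < e"
  shows "sum g (S_eps e) = (\<Sum>i=1..grid_last e. g (grid e i))"
  unfolding S_eps_eq_grid[OF assms] using assms
  by (subst sum.reindex) (auto simp: inj_on_def grid_def)

lemma grid_le_minus_iff:
  assumes "0 < e"
  shows "grid e i \<le> grid e k - e \<longleftrightarrow> i < k"
proof -
  have "grid e i \<le> grid e k - e \<longleftrightarrow> real (Suc i) * e \<le> real k * e"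
    by (simp add: grid_def algebra_simps)
  also have "\<dots> \<longleftrightarrow> i < k"
    by (simp only: mult_le_cancel_right_pos[OF assms] of_nat_le_iff Suc_le_eq)
  finally show ?thesis .
qed

lemma sum_S_eps_below:
  assumes "0 < e" "k \<le> grid_last e"
  shows "sum g {x \<in> S_eps e. x \<le> grid e k - e} = (\<Sum>i=1..<k. g (grid e i))"
proof -
  have "{x \<in> S_eps e. x \<le> grid e k - e} = grid e ` {1..<k}"
  proof (intro set_eqI iffI)
    fix x assume "x \<in> {x \<in> S_eps e. x \<le> grid e k - e}"
    then obtain i where "x = grid e i" "1 \<le> i" "grid e i \<le> grid e k - e"
      unfolding S_eps_eq_grid[OF assms(1)] by auto
    thus "x \<in> grid e ` {1..<k}" using grid_le_minus_iff[OF assms(1)] by auto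
  next
    fix x assume "x \<in> grid e ` {1..<k}"
    then obtain i where "x = grid e i" "1 \<le> i" "i < k" by auto
    thus "x \<in> {x \<in> S_eps e. x \<le> grid e k - e}"
      using assms grid_le_minus_iff[OF assms(1), of i k]
      unfolding S_eps_eq_grid[OF assms(1)] by auto
  qed
  thus ?thesis using assms
    by (simp, subst sum.reindex) (auto simp: inj_on_def grid_def)
qed

lemma LP_feasible_iff_grid:
  assumes e: "0 < e"
  shows "LP_feasible e B c a N0 N \<longleftrightarrow>
     0 \<le> N0 \<and> (\<forall>i\<in>{1..grid_last e}. 0 \<le> N (grid e i)) \<and>
     real B - 1 / real B powr c \<le> N0 + (\<Sum>i=1..grid_last e. (1 - grid e i) * N (grid e i)) \<and>
     N0 + (\<Sum>i=1..grid_last e. N (grid e i)) \<le> a * real B \<and>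
     (\<forall>k\<in>{1..grid_last e}. N0 + (\<Sum>i=1..<k. N (grid e i)) + of_int \<lfloor>real B / (1 - grid e k)\<rfloor>
                              \<le> a * of_int \<lceil>real B / (1 - grid e k)\<rceil>)"
proof -
  have ball: "(\<forall>t\<in>S_eps e. P t) \<longleftrightarrow> (\<forall>k\<in>{1..grid_last e}. P (grid e k))" for P
    by (simp add: S_eps_eq_grid[OF e])
  show ?thesis
    unfolding LP_feasible_def sum_S_eps[OF e] ball
    by (intro conj_cong refl ball_cong) (simp_all add: sum_S_eps_below[OF e])
qed

lemma grid_last_bounds:
  assumes "0 < e" "e \<le> 1/6"
  shows "1 \<le> grid_last e" "x_star \<le> 1 - grid e (grid_last e)"
    "1 - grid e (grid_last e) < x_star + e"
proof -
  show "1 \<le> grid_last e"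
    using assms x_star_le grid_le_iff[OF assms(1), of 1] by (simp add: grid_def)
  have "grid e (grid_last e) \<le> 1 - x_star" by (simp add: grid_le_iff[OF assms(1)])
  thus "x_star \<le> 1 - grid e (grid_last e)" by simp
  show "1 - grid e (grid_last e) < x_star + e"
    using grid_le_iff[OF assms(1), of "Suc (grid_last e)"] by (simp add: grid_Suc)
qed

section \<open>Riemann sums of \<open>1/(1 - t)\<close>\<close>

lemma ln_diff_bounds:
  fixes e s :: real
  assumes "0 < e" "e < s"
  shows "e / s \<le> ln s - ln (s - e)" "ln s - ln (s - e) \<le> e / (s - e)"
proof -
  have "ln (s / (s - e)) \<le> s / (s - e) - 1" using assms by (intro ln_le_minus_one) simp
  thus "ln s - ln (s - e) \<le> e / (s - e)" using assms by (simp add: ln_div field_simps)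
  have "ln ((s - e) / s) \<le> (s - e) / s - 1" using assms by (intro ln_le_minus_one) simp
  thus "e / s \<le> ln s - ln (s - e)" using assms by (simp add: ln_div field_simps)
qed

lemma sum_grid_recip_le_ln:
  assumes "0 < e" "1 \<le> n" "grid e (Suc n) < 1"
  shows "(\<Sum>k=2..n. e / (1 - grid e k)) \<le> ln (1 - grid e 2) - ln (1 - grid e (Suc n))"
proof -
  have "(\<Sum>k=2..n. e / (1 - grid e k)) \<le>
        (\<Sum>k=2..n. (- ln (1 - grid e (Suc k))) - (- ln (1 - grid e k)))"
  proof (rule sum_mono)
    fix k assume "k \<in> {2..n}"
    hence "grid e (Suc k) < 1" using assms grid_mono[of e "Suc k" "Suc n"] by simp
    thus "e / (1 - grid e k) \<le> (- ln (1 - grid e (Suc k))) - (- ln (1 - grid e k))"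
      using ln_diff_bounds(1)[of e "1 - grid e k"] assms by (simp add: grid_Suc algebra_simps)
  qed
  also have "\<dots> = ln (1 - grid e 2) - ln (1 - grid e (Suc n))"
    using assms by (subst sum_Suc_diff) auto
  finally show ?thesis .
qed

lemma ln_le_sum_grid_recip:
  assumes "0 < e" "1 \<le> n" "grid e n < 1"
  shows "ln (1 - grid e 1) - ln (1 - grid e n) \<le> (\<Sum>k=2..n. e / (1 - grid e k))"
proof -
  have "ln (1 - grid e 1) - ln (1 - grid e n) =
        (\<Sum>k\<in>{Suc 1..n}. (- ln (1 - grid e k)) - (- ln (1 - grid e (k - 1))))"
    using assms by (subst sum_telescope'') auto
  also have "\<dots> \<le> (\<Sum>k\<in>{Suc 1..n}. e / (1 - grid e k))"
  proof (rule sum_mono)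
    fix k assume k: "k \<in> {Suc 1..n}"
    hence "grid e k < 1" using assms grid_mono[of e k n] by simp
    moreover have "grid e k = grid e (k - 1) + e" using k grid_Suc[of e "k - 1"] by simp
    ultimately show "(- ln (1 - grid e k)) - (- ln (1 - grid e (k - 1))) \<le> e / (1 - grid e k)"
      using ln_diff_bounds(2)[of e "1 - grid e (k - 1)"] assms by (simp add: algebra_simps)
  qed
  finally show ?thesis by (simp add: numeral_2_eq_2)
qed

text \<open>A Riemann sum for \<open>2 + \<integral> dt/(1 - t)\<close> over \<open>[1/2, 1 - x*]\<close>, that is for \<open>2 - ln 2 - ln x*\<close>,
  which equals \<open>1/x* - 1\<close> by \<open>ln_x_star\<close>.\<close>
definition recip_sum :: "real \<Rightarrow> real" where
  "recip_sum e = 1 / (1 - grid e 1) + (\<Sum>k=2..grid_last e. e / (1 - grid e k))"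

lemma recip_sum_le:
  assumes e: "0 < e" "e \<le> 1/100"
  shows "recip_sum e \<le> 1 / x_star - 1 + 17 * e"
proof -
  define n where "n = grid_last e"
  have n: "1 \<le> n" "x_star \<le> 1 - grid e n" "1 - grid e n < x_star + e"
    using grid_last_bounds[OF e(1)] e(2) unfolding n_def by auto
  have "1 / (1 - grid e 1) \<le> 2 + 5 * e"
    using e by (simp add: grid_def field_simps)
  moreover have "(\<Sum>k=2..n. e / (1 - grid e k)) \<le> ln (1 - grid e 2) - ln (1 - grid e (Suc n))"
    using n x_star_ge e by (intro sum_grid_recip_le_ln) (auto simp: grid_Suc)
  moreover have "ln (1 - grid e 2) \<le> ln (1/2)" using e by (simp add: grid_def)
  moreover have "ln x_star - ln (x_star - e) \<le> e / (x_star - e)"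
    using ln_diff_bounds(2)[of e x_star] e x_star_ge by simp
  moreover have "ln (x_star - e) \<le> ln (1 - grid e (Suc n))"
    using n x_star_ge e by (simp add: grid_Suc)
  moreover have "e / (x_star - e) \<le> 12 * e"
  proof -
    have "e * 1 \<le> e * (12 * (x_star - e))" using e x_star_ge by (intro mult_left_mono) auto
    thus ?thesis using e x_star_ge by (simp add: pos_divide_le_eq)
  qed
  ultimately show ?thesis
    using ln_x_star unfolding recip_sum_def n_def[symmetric] by (simp add: ln_div)
qed

lemma recip_sum_ge:
  assumes e: "0 < e" "e \<le> 1/100"
  shows "1 / x_star - 1 - 13 * e \<le> recip_sum e"
proof -
  define n where "n = grid_last e"
  have n: "1 \<le> n" "x_star \<le> 1 - grid e n" "1 - grid e n < x_star + e"
    using grid_last_bounds[OF e(1)] e(2) unfolding n_def by auto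
  have "2 \<le> 1 / (1 - grid e 1)" using e by (simp add: grid_def field_simps)
  moreover have "ln (1 - grid e 1) - ln (1 - grid e n) \<le> (\<Sum>k=2..n. e / (1 - grid e k))"
    using n x_star_ge e by (intro ln_le_sum_grid_recip) auto
  moreover have "ln (1/2) - ln (1/2 - e) \<le> e / (1/2 - e)"
    using ln_diff_bounds(2)[of e "1/2"] e by simp
  moreover have "e / (1/2 - e) \<le> 3 * e" using e by (simp add: field_simps)
  moreover have "ln (1 - grid e n) \<le> ln (x_star + e)" using n x_star_ge by simp
  moreover have "ln (x_star + e) - ln x_star \<le> e / x_star"
    using ln_diff_bounds(2)[of e "x_star + e"] e x_star_ge by simp
  moreover have "e / x_star \<le> 10 * e" using e x_star_ge by (simp add: field_simps)
  moreover have "1 - grid e 1 = 1/2 - e" by (simp add: grid_def)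
  ultimately show ?thesis
    using ln_x_star unfolding recip_sum_def n_def[symmetric] by (simp add: ln_div)
qed

section \<open>Lower bound\<close>

lemma LP_feasible_nonneg:
  assumes "0 < real B" "LP_feasible e B c a N0 N"
  shows "0 \<le> a"
proof -
  have "0 \<le> N0 + (\<Sum>x\<in>S_eps e. N x)"
    using assms(2) unfolding LP_feasible_def by (simp add: sum_nonneg)
  also have "\<dots> \<le> a * real B" using assms(2) unfolding LP_feasible_def by blast
  finally show ?thesis using assms(1) by (simp add: zero_le_mult_iff)
qed

lemma capacity_constraint_bound:
  fixes P a y :: real
  assumes "0 \<le> a" "P + of_int \<lfloor>y\<rfloor> \<le> a * of_int \<lceil>y\<rceil>"
  shows "P \<le> (a - 1) * y + (a + 1)"
proof -
  have "a * of_int \<lceil>y\<rceil> \<le> a * (y + 1)"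
    using assms(1) by (intro mult_left_mono) linarith+
  moreover have "y - 1 < of_int \<lfloor>y\<rfloor>" by linarith
  ultimately show ?thesis using assms(2) by (simp add: algebra_simps)
qed

lemma coverage_summation_by_parts:
  fixes u :: "nat \<Rightarrow> real"
  assumes "1 \<le> n"
  shows "N0 + (\<Sum>i=1..n. (1 - grid e i) * u i) =
    grid e 1 * N0 + e * (\<Sum>k=2..n. N0 + (\<Sum>i=1..<k. u i)) + (1 - grid e n) * (N0 + (\<Sum>i=1..n. u i))"
  using assms
proof (induction n rule: nat_induct_at_least)
  case base
  show ?case by (simp add: algebra_simps)
next
  case (Suc n)
  have "(\<Sum>k=2..Suc n. N0 + (\<Sum>i=1..<k. u i)) = (\<Sum>k=2..n. N0 + (\<Sum>i=1..<k. u i)) + (N0 + (\<Sum>i=1..n. u i))"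
    using Suc.hyps by (simp add: atLeastLessThanSuc_atLeastAtMost)
  with Suc show ?case by (simp add: grid_Suc algebra_simps)
qed

lemma capacity_profile_weighted_sum:
  assumes "0 < e" "1 \<le> grid_last e"
  shows "grid e 1 * (p / (1 - grid e 1) + q) + e * (\<Sum>k=2..grid_last e. p / (1 - grid e k) + q)
         = p * (recip_sum e - 1) + q * grid e (grid_last e)"
proof -
  define n where "n = grid_last e"
  have "grid e 1 * (1 / (1 - grid e 1)) = 1 / (1 - grid e 1) - 1"
    using grid_lt_one[OF assms] by (simp add: field_simps)
  moreover have "grid e 1 + e * (real n - 1) = grid e n" by (simp add: grid_def algebra_simps)
  moreover have "(\<Sum>k=2..n. p / (1 - grid e k) + q) = p * (\<Sum>k=2..n. 1 / (1 - grid e k)) + (real n - 1) * q"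
    using assms(2) by (simp add: n_def sum.distrib sum_distrib_left of_nat_diff)
  moreover have "recip_sum e = 1 / (1 - grid e 1) + e * (\<Sum>k=2..n. 1 / (1 - grid e k))"
    by (simp add: recip_sum_def sum_distrib_left n_def)
  ultimately show ?thesis unfolding n_def[symmetric] by algebra
qed

lemma LP_feasible_scaled_coverage_bound:
  assumes e: "0 < e" "e \<le> 1/6" and B: "1 \<le> real B" and c: "0 < c"
    and F: "LP_feasible e B c a N0 N"
  defines "t \<equiv> grid e (grid_last e)"
  shows "real B - 1 \<le> (a - 1) * real B * (recip_sum e - 1) + (a + 1) * t + (1 - t) * (a * real B)"
proof -
  define n where "n = grid_last e"
  define u where "u i = N (grid e i)" for i
  have n: "1 \<le> n" "x_star \<le> 1 - t" using grid_last_bounds[OF e] unfolding n_def t_def by auto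
  have a: "0 \<le> a" using LP_feasible_nonneg[OF _ F] B by simp
  have cover: "real B - 1 / real B powr c \<le> N0 + (\<Sum>i=1..n. (1 - grid e i) * u i)"
    and total: "N0 + (\<Sum>i=1..n. u i) \<le> a * real B"
    and cap: "\<forall>k\<in>{1..n}. N0 + (\<Sum>i=1..<k. u i) + of_int \<lfloor>real B / (1 - grid e k)\<rfloor>
                              \<le> a * of_int \<lceil>real B / (1 - grid e k)\<rceil>"
    using F unfolding LP_feasible_iff_grid[OF e(1)] n_def u_def by blast+
  have prefix: "N0 + (\<Sum>i=1..<k. u i) \<le> (a - 1) * real B / (1 - grid e k) + (a + 1)"
    if "k \<in> {1..n}" for k
    using capacity_constraint_bound[OF a] cap that by fastforce
  have "1 / real B powr c \<le> 1" using B c by (simp add: ge_one_powr_ge_zero)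
  hence "real B - 1 \<le> N0 + (\<Sum>i=1..n. (1 - grid e i) * u i)" using cover by linarith
  also have "\<dots> = grid e 1 * N0 + e * (\<Sum>k=2..n. N0 + (\<Sum>i=1..<k. u i)) + (1 - t) * (N0 + (\<Sum>i=1..n. u i))"
    unfolding t_def n_def[symmetric] by (rule coverage_summation_by_parts[OF n(1)])
  also have "\<dots> \<le> grid e 1 * ((a - 1) * real B / (1 - grid e 1) + (a + 1))
                  + e * (\<Sum>k=2..n. (a - 1) * real B / (1 - grid e k) + (a + 1)) + (1 - t) * (a * real B)"
  proof -
    have "grid e 1 * N0 \<le> grid e 1 * ((a - 1) * real B / (1 - grid e 1) + (a + 1))"
      using prefix[of 1] n(1) e by (intro mult_left_mono) (auto simp: grid_def)
    moreover have "e * (\<Sum>k=2..n. N0 + (\<Sum>i=1..<k. u i))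
                   \<le> e * (\<Sum>k=2..n. (a - 1) * real B / (1 - grid e k) + (a + 1))"
      using prefix e by (intro mult_left_mono sum_mono) auto
    moreover have "(1 - t) * (N0 + (\<Sum>i=1..n. u i)) \<le> (1 - t) * (a * real B)"
      using total n(2) x_star_ge by (intro mult_left_mono) auto
    ultimately show ?thesis by linarith
  qed
  also have "\<dots> = (a - 1) * real B * (recip_sum e - 1) + (a + 1) * t + (1 - t) * (a * real B)"
    using capacity_profile_weighted_sum[OF e(1) n(1)[unfolded n_def]] by (simp add: n_def t_def)
  finally show ?thesis .
qed

lemma LP_feasible_coverage_bound:
  assumes e: "0 < e" "e \<le> 1/100" and B: "1/e \<le> real B" and c: "0 < c"
    and F: "LP_feasible e B c a N0 N"
  shows "1 - e \<le> (a - 1) * (recip_sum e - 1) + (a + 1) * e + (x_star + e) * a"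
proof -
  define t where "t = grid e (grid_last e)"
  have e6: "e \<le> 1/6" using e by simp
  have t: "t \<le> 1" "1 - t < x_star + e"
    using grid_last_bounds[OF e(1) e6] x_star_ge e unfolding t_def by (auto simp: grid_def)
  have eB: "1 \<le> e * real B" using B e by (simp add: field_simps)
  have "100 \<le> 1/e" using e by (simp add: field_simps)
  hence B1: "1 \<le> real B" using B by linarith
  have a: "0 \<le> a" using LP_feasible_nonneg[OF _ F] B1 by simp
  have "(a + 1) * t \<le> (a + 1) * (e * real B)" using a t eB by (intro mult_left_mono) auto
  moreover have "(1 - t) * (a * real B) \<le> (x_star + e) * (a * real B)"
    using a B1 t by (intro mult_right_mono) auto
  ultimately have "real B * (1 - e) \<le> real B * ((a - 1) * (recip_sum e - 1) + (a + 1) * e + (x_star + e) * a)"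
    using LP_feasible_scaled_coverage_bound[OF e(1) e6 B1 c F] eB
    unfolding t_def[symmetric] by (simp add: algebra_simps)
  thus ?thesis using B1 by simp
qed

lemma alpha_star_le_of_coverage_bound:
  fixes a e R :: real
  assumes e: "0 < e" "e \<le> 1/100" and R: "1 \<le> R" "R \<le> 1 / x_star - 1 + 17 * e"
    and H: "1 - e \<le> (a - 1) * (R - 1) + (a + 1) * e + (x_star + e) * a"
  shows "alpha_star - 11 * e \<le> a"
proof -
  define x where "x = x_star"
  have x: "1/10 \<le> x" "x \<le> 1/3" using x_star_ge x_star_le by (simp_all add: x_def)
  consider "a < 1" | "1 \<le> a" "a \<le> 3/2" | "3/2 < a" by linarith
  thus ?thesis
  proof cases
    case 1
    have "(a - 1) * (R - 1) \<le> 0" using 1 R by (simp add: mult_nonpos_nonneg)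
    moreover have "(a + 1) * e \<le> 2 * e" using 1 e by simp
    moreover have "(x + e) * a \<le> x + e" using 1 x e mult_left_mono[of a 1 "x + e"] by simp
    ultimately show ?thesis using H e x unfolding x_def by linarith
  next
    case 2
    have "(a - 1) * (R - 1) \<le> (a - 1) * (1/x - 2 + 17 * e)"
      using 2 R by (intro mult_left_mono) (simp_all add: x_def)
    moreover have "(a - 1) * (17 * e) \<le> 1/2 * (17 * e)" using 2 e by (intro mult_right_mono) auto
    moreover have "e * a \<le> e * (3/2)" using 2 e by (intro mult_left_mono) auto
    ultimately have "1 - 27/2 * e \<le> (a - 1) * (1/x - 2) + x * a"
      using H unfolding x_def[symmetric] by (simp add: algebra_simps)
    hence "x * (1 - 27/2 * e) \<le> x * ((a - 1) * (1/x - 2) + x * a)" using x by simp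
    also have "\<dots> = a * (1 - x)^2 - 1 + 2 * x" using x by (simp add: field_simps power2_eq_square)
    finally have "x - 27/2 * e * x \<le> a * (1 - x)^2 - 1 + 2 * x" by (simp add: algebra_simps)
    moreover have "27/2 * e * x \<le> 27/2 * e * (1/3)" using x e by (intro mult_left_mono) auto
    ultimately have "(1 - x) - 9/2 * e \<le> a * (1 - x)^2" by linarith
    moreover have "9/2 * e \<le> 11 * e * (1 - x)^2"
    proof -
      have "(2/3)^2 \<le> (1 - x)^2" using x by (intro power_mono) auto
      hence "11 * e * (2/3)^2 \<le> 11 * e * (1 - x)^2" using e by (intro mult_left_mono) auto
      thus ?thesis using e by (simp add: power2_eq_square)
    qed
    moreover have "(1 / (1 - x) - 11 * e) * (1 - x)^2 = (1 - x) - 11 * e * (1 - x)^2"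
      using x by (simp add: field_simps power2_eq_square)
    ultimately have "(1 / (1 - x) - 11 * e) * (1 - x)^2 \<le> a * (1 - x)^2" by linarith
    hence "1 / (1 - x) - 11 * e \<le> a" using x by simp
    thus ?thesis by (simp add: alpha_star_eq x_def)
  next
    case 3
    thus ?thesis using alpha_star_bounds e by linarith
  qed
qed

lemma LP_feasible_ge:
  assumes "0 < e" "e \<le> 1/100" "1/e \<le> real B" "0 < c" "LP_feasible e B c a N0 N"
  shows "alpha_star - 11 * e \<le> a"
proof (rule alpha_star_le_of_coverage_bound)
  have "3 \<le> 1 / x_star" using x_star_ge x_star_le by (simp add: field_simps)
  thus "1 \<le> recip_sum e" using recip_sum_ge[of e] assms(1,2) by linarith
qed (use assms recip_sum_le LP_feasible_coverage_bound in auto)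

section \<open>Upper bound\<close>

text \<open>The covering in which the mass placed before each grid point \<open>t\<close> is \<open>b B/(1 - t)\<close>, so that
  every capacity constraint is tight up to rounding; nothing is placed at the last grid point.\<close>
definition tight_N0 :: "real \<Rightarrow> real \<Rightarrow> real \<Rightarrow> real" where
  "tight_N0 b e B = b * B / (1 - grid e 1)"

definition tight_N :: "real \<Rightarrow> real \<Rightarrow> real \<Rightarrow> real \<Rightarrow> real" where
  "tight_N b e B x =
     (if x + e \<le> 1 - x_star then b * B * (1 / (1 - (x + e)) - 1 / (1 - x)) else 0)"

lemma tight_N_grid:
  assumes "0 < e"
  shows "tight_N b e B (grid e i) =
    (if i < grid_last e then b * B * (1 / (1 - grid e (Suc i)) - 1 / (1 - grid e i)) else 0)"
  using grid_le_iff[OF assms, of "Suc i"] by (simp add: tight_N_def grid_Suc Suc_le_eq)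

lemma tight_N_nonneg:
  assumes "0 < e" "0 \<le> b" "0 \<le> B"
  shows "0 \<le> tight_N b e B (grid e i)"
proof (cases "i < grid_last e")
  case True
  hence "1 / (1 - grid e i) \<le> 1 / (1 - grid e (Suc i))"
    using grid_lt_one[OF assms(1), of "Suc i"] assms(1) by (simp add: grid_Suc frac_le)
  thus ?thesis using True assms by (simp add: tight_N_grid)
qed (simp add: tight_N_grid assms(1))

lemma tight_prefix_sum:
  assumes "0 < e" "1 \<le> k" "k \<le> grid_last e"
  shows "tight_N0 b e B + (\<Sum>i=1..<k. tight_N b e B (grid e i)) = b * B / (1 - grid e k)"
proof -
  have "(\<Sum>i=1..<k. tight_N b e B (grid e i))
        = b * B * (\<Sum>i=1..<k. 1 / (1 - grid e (Suc i)) - 1 / (1 - grid e i))"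
    using assms by (simp add: tight_N_grid sum_distrib_left)
  also have "\<dots> = b * B * (1 / (1 - grid e k) - 1 / (1 - grid e 1))"
    using sum_Suc_diff'[of 1 k "\<lambda>i. 1 / (1 - grid e i)"] assms(2) by simp
  finally show ?thesis by (simp add: tight_N0_def algebra_simps)
qed

lemma tight_total:
  assumes "0 < e" "e \<le> 1/6"
  shows "tight_N0 b e B + (\<Sum>i=1..grid_last e. tight_N b e B (grid e i))
         = b * B / (1 - grid e (grid_last e))"
  using tight_prefix_sum[OF assms(1) grid_last_bounds(1)[OF assms] order_refl]
    grid_last_bounds(1)[OF assms]
  by (simp add: atLeastLessThanSuc_atLeastAtMost[symmetric] tight_N_grid[OF assms(1)])

lemma tight_coverage:
  assumes e: "0 < e" "e \<le> 1/6"
  shows "tight_N0 b e B + (\<Sum>i=1..grid_last e. (1 - grid e i) * tight_N b e B (grid e i))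
         = b * B * recip_sum e"
proof -
  define n where "n = grid_last e"
  have "(1 - grid e i) * tight_N b e B (grid e i) = b * B * (e / (1 - grid e (Suc i)))"
    if "i < n" for i
  proof -
    define s where "s = 1 - grid e (Suc i)"
    have "0 < s" using that grid_lt_one[OF e(1), of "Suc i"] by (simp add: s_def n_def)
    have "1 - grid e i = s + e" by (simp add: s_def grid_Suc)
    hence "(1 - grid e i) * tight_N b e B (grid e i) = (s + e) * (b * B * (1 / s - 1 / (s + e)))"
      using that by (simp add: tight_N_grid[OF e(1)] s_def[symmetric] n_def)
    also have "\<dots> = b * B * (e / s)"
      using \<open>0 < s\<close> e by (simp add: field_simps add_pos_pos[THEN less_imp_neq, symmetric])
    finally show ?thesis by (simp add: s_def)
  qed
  hence "(\<Sum>i=1..n. (1 - grid e i) * tight_N b e B (grid e i))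
         = b * B * (\<Sum>i=1..<n. e / (1 - grid e (Suc i)))"
    using grid_last_bounds(1)[OF e]
    by (simp add: atLeastLessThanSuc_atLeastAtMost[symmetric] tight_N_grid[OF e(1)] n_def sum_distrib_left)
  also have "(\<Sum>i=1..<n. e / (1 - grid e (Suc i))) = (\<Sum>k=Suc 1..<Suc n. e / (1 - grid e k))"
    by (rule sum.shift_bounds_Suc_ivl[symmetric])
  also have "{Suc 1..<Suc n} = {2..n}" by auto
  finally show ?thesis by (simp add: tight_N0_def recip_sum_def n_def algebra_simps)
qed

lemma tight_scale_recip_sum:
  assumes e: "0 < e" "e \<le> 1/100"
  shows "1 \<le> x_star * (alpha_star * (1 + 14 * e)) * recip_sum e"
proof -
  have x: "1/10 \<le> x_star" "x_star \<le> 1/3" by (rule x_star_ge, rule x_star_le)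
  have "x_star * alpha_star \<le> 1/2" using x by (simp add: alpha_star_eq field_simps)
  hence "(1 + 14 * e) * (1 - 13/2 * e) \<le> (1 + 14 * e) * (1 - 13 * e * (x_star * alpha_star))"
    using e by (intro mult_left_mono) (auto simp: mult_ac)
  also have "\<dots> = x_star * (alpha_star * (1 + 14 * e)) * (1 / x_star - 1 - 13 * e)"
    using x by (simp add: alpha_star_eq field_simps)
  also have "\<dots> \<le> x_star * (alpha_star * (1 + 14 * e)) * recip_sum e"
    using x alpha_star_bounds e recip_sum_ge[OF e] by (intro mult_left_mono) auto
  finally have "(1 + 14 * e) * (1 - 13/2 * e) \<le> x_star * (alpha_star * (1 + 14 * e)) * recip_sum e" .
  moreover have "(1 + 14 * e) * (1 - 13/2 * e) = 1 + 15/2 * e - 91 * (e * e)"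
    by (simp add: field_simps)
  moreover have "e * e \<le> e * (1/100)" using e by (intro mult_left_mono) auto
  ultimately show ?thesis using e by linarith
qed

lemma LP_feasible_tight:
  assumes e: "0 < e" "e \<le> 1/100"
  defines "a \<equiv> alpha_star * (1 + 14 * e)"
  shows "LP_feasible e B c a (tight_N0 (x_star * a) e (real B)) (tight_N (x_star * a) e (real B))"
proof -
  define n where "n = grid_last e"
  define b where "b = x_star * a"
  have n: "1 \<le> n" "x_star \<le> 1 - grid e n"
    using grid_last_bounds[OF e(1)] e(2) unfolding n_def by auto
  have x: "1/10 \<le> x_star" "x_star \<le> 1/3" by (rule x_star_ge, rule x_star_le)
  have a: "a * (1 - x_star) = 1 + 14 * e" "0 \<le> a"
    using x alpha_star_bounds e by (simp_all add: a_def alpha_star_eq)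
  have b: "0 \<le> b" using x a by (simp add: b_def)
  have e6: "e \<le> 1/6" using e by simp
  show ?thesis
    unfolding LP_feasible_iff_grid[OF e(1)] n_def[symmetric] b_def[symmetric]
  proof (intro conjI ballI)
    show "0 \<le> tight_N0 b e (real B)"
      using b grid_lt_one[OF e(1) n(1)[unfolded n_def]] by (simp add: tight_N0_def)
    show "0 \<le> tight_N b e (real B) (grid e i)" for i using tight_N_nonneg e b by simp
    have "real B * 1 \<le> real B * (b * recip_sum e)"
      using tight_scale_recip_sum[OF e] by (intro mult_left_mono) (simp_all add: b_def a_def)
    thus "real B - 1 / real B powr c
          \<le> tight_N0 b e (real B) + (\<Sum>i=1..n. (1 - grid e i) * tight_N b e (real B) (grid e i))"
      using tight_coverage[OF e(1) e6, of b "real B"] by (simp add: n_def algebra_simps add_increasing)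
    have "b / (1 - grid e n) \<le> b / x_star" using b n(2) x by (simp add: frac_le)
    also have "\<dots> = a" using x by (simp add: b_def)
    finally have "b / (1 - grid e n) * real B \<le> a * real B" by (rule mult_right_mono) simp
    thus "tight_N0 b e (real B) + (\<Sum>i=1..n. tight_N b e (real B) (grid e i)) \<le> a * real B"
      using tight_total[OF e(1) e6, of b "real B"] by (simp add: n_def)
  next
    fix k assume k: "k \<in> {1..n}"
    define y where "y = real B / (1 - grid e k)"
    have "0 \<le> y" using grid_lt_one[OF e(1), of k] k by (simp add: y_def n_def)
    have "b + 1 \<le> a" using a x e by (simp add: b_def algebra_simps)
    hence "(b + 1) * y \<le> a * of_int \<lceil>y\<rceil>"
      using \<open>0 \<le> y\<close> \<open>0 \<le> a\<close> by (meson le_of_int_ceiling mult_mono)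
    moreover have "tight_N0 b e (real B) + (\<Sum>i=1..<k. tight_N b e (real B) (grid e i)) = b * y"
      using tight_prefix_sum[OF e(1)] k by (simp add: y_def n_def)
    ultimately show "tight_N0 b e (real B) + (\<Sum>i=1..<k. tight_N b e (real B) (grid e i))
        + of_int \<lfloor>real B / (1 - grid e k)\<rfloor> \<le> a * of_int \<lceil>real B / (1 - grid e k)\<rceil>"
      unfolding y_def[symmetric] by (simp add: algebra_simps) linarith
  qed
qed

section \<open>The optimal value\<close>

lemma LP_feasible_two:
  assumes "0 < e"
  shows "LP_feasible e B c 2 (real B) (\<lambda>_. 0)"
  unfolding LP_feasible_def
proof (intro conjI ballI)
  show "real B - 1 / real B powr c \<le> real B + (\<Sum>x\<in>S_eps e. (1 - x) * 0)" by simp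
  fix t assume "t \<in> S_eps e"
  then obtain i where "t = grid e i" "grid e i < 1"
    using assms grid_lt_one unfolding S_eps_eq_grid[OF assms] by auto
  moreover have "0 \<le> grid e i" using assms by (simp add: grid_def)
  ultimately have "real B \<le> real B / (1 - t)" by (simp add: le_divide_eq mult_left_le)
  thus "real B + (\<Sum>x\<in>{x \<in> S_eps e. x \<le> t - e}. 0) + of_int \<lfloor>real B / (1 - t)\<rfloor>
        \<le> 2 * of_int \<lceil>real B / (1 - t)\<rceil>"
    using of_int_floor_le[of "real B / (1 - t)"] le_of_int_ceiling[of "real B / (1 - t)"]
    by (simp del: of_int_floor_le le_of_int_ceiling)
qed simp_all

lemma LP_opt_le:
  assumes "0 < real B" "LP_feasible e B c a N0 N"
  shows "LP_opt e B c \<le> a"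
  unfolding LP_opt_def
proof (rule cInf_lower)
  show "bdd_below {a. \<exists>N0 N. LP_feasible e B c a N0 N}"
    using LP_feasible_nonneg[OF assms(1)] by (auto intro: bdd_belowI[of _ 0])
qed (use assms in blast)

lemma LP_opt_ge:
  assumes "0 < e" "\<And>a N0 N. LP_feasible e B c a N0 N \<Longrightarrow> l \<le> a"
  shows "l \<le> LP_opt e B c"
  unfolding LP_opt_def
  by (rule cInf_greatest) (use assms LP_feasible_two[OF assms(1)] in blast)+

theorem lemma2p2:
  shows "\<exists>C>0. \<forall>\<epsilon>>0. \<forall>(B::nat) (c::real). real B \<ge> 1 / \<epsilon> \<longrightarrow> c > 0 \<longrightarrow>
           \<bar>LP_opt \<epsilon> B c - alpha_star\<bar> \<le> C * \<epsilon>"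
proof (intro exI[of _ 200] conjI allI impI)
  fix e c :: real and B :: nat assume e: "0 < e" and B: "1/e \<le> real B" and c: "0 < c"
  have "0 < 1/e" using e by simp
  hence B0: "0 < real B" using B by linarith
  show "\<bar>LP_opt e B c - alpha_star\<bar> \<le> 200 * e"
  proof (cases "e \<le> 1/100")
    case True
    have "alpha_star - 11 * e \<le> LP_opt e B c"
      using LP_feasible_ge[OF e True B c] by (intro LP_opt_ge[OF e])
    moreover have "LP_opt e B c \<le> alpha_star + alpha_star * (14 * e)"
      using LP_opt_le[OF B0 LP_feasible_tight[OF e True]] by (simp add: algebra_simps)
    moreover have "alpha_star * (14 * e) \<le> 3/2 * (14 * e)"
      using alpha_star_bounds e by (intro mult_right_mono) auto
    ultimately show ?thesis using e by linarith
  next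
    case False
    have "0 \<le> LP_opt e B c" using LP_feasible_nonneg[OF B0] by (intro LP_opt_ge[OF e])
    moreover have "LP_opt e B c \<le> 2" using LP_opt_le[OF B0 LP_feasible_two[OF e]] .
    ultimately show ?thesis using False alpha_star_bounds by linarith
  qed
qed simp

end
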